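(* Let $G=\bigoplus_{n=2}^\infty\mathbb Z/n$. There is a proper, left-invariant metric $d_G$ on $G$ such that $\operatorname{l\text{-}asdim}(G,d_G)>0=\operatorname{asdim}(G,d_G)$.
   Context: For a metric space $X$: $\operatorname{asdim}(X)\le n$ iff for every $r>0$ there are $D<\infty$ and families $\mathcal U_1,\dots,\mathcal U_{n+1}$ of subsets covering $X$, each $r$-disjoint (points in different members of the same family at distance $\ge r$), with members of diameter $\le D$. $\operatorname{l\text{-}asdim}(X)\le n$ (linearly controlled asymptotic dimension) iff there are $c>0$ and an unbounded set $U\subset\mathbb R_+$ such that for every $r\in U$ there are families $\mathcal U_1,\dots,\mathcal U_{n+1}$ covering $X$, each $r$-disjoint, with members of diameter $\le cr$. A metric is proper if bounded sets are finite (closed balls are compact). *)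

theory Defs
  imports Complex_Main
begin

text \<open>The group G = direct sum over n >= 2 of Z/n, represented as finitely
supported functions g :: nat => int with g n in {0..n-1} for n >= 2 and
g 0 = g 1 = 0; addition is coordinatewise modulo n.\<close>

definition dsumG :: "(nat \<Rightarrow> int) set" where
  "dsumG = {g. finite {n. g n \<noteq> 0} \<and> g 0 = 0 \<and> g 1 = 0 \<and>
              (\<forall>n\<ge>2. 0 \<le> g n \<and> g n < int n)}"

definition dsumG_add :: "(nat \<Rightarrow> int) \<Rightarrow> (nat \<Rightarrow> int) \<Rightarrow> (nat \<Rightarrow> int)" where
  "dsumG_add g h = (\<lambda>n. (g n + h n) mod int n)"

definition is_metric_on :: "'a set \<Rightarrow> ('a \<Rightarrow> 'a \<Rightarrow> real) \<Rightarrow> bool" where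
  "is_metric_on X d \<longleftrightarrow>
     (\<forall>x\<in>X. \<forall>y\<in>X. 0 \<le> d x y \<and> (d x y = 0 \<longleftrightarrow> x = y) \<and> d x y = d y x) \<and>
     (\<forall>x\<in>X. \<forall>y\<in>X. \<forall>z\<in>X. d x z \<le> d x y + d y z)"

definition proper_metric_on :: "'a set \<Rightarrow> ('a \<Rightarrow> 'a \<Rightarrow> real) \<Rightarrow> bool" where
  "proper_metric_on X d \<longleftrightarrow> (\<forall>x\<in>X. \<forall>R. finite {y\<in>X. d x y \<le> R})"

definition r_disjoint :: "('a \<Rightarrow> 'a \<Rightarrow> real) \<Rightarrow> real \<Rightarrow> 'a set set \<Rightarrow> bool" where
  "r_disjoint d r \<U> \<longleftrightarrow>
     (\<forall>A\<in>\<U>. \<forall>B\<in>\<U>. A \<noteq> B \<longrightarrow> (\<forall>x\<in>A. \<forall>y\<in>B. r \<le> d x y))"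

definition diam_bounded :: "('a \<Rightarrow> 'a \<Rightarrow> real) \<Rightarrow> real \<Rightarrow> 'a set set \<Rightarrow> bool" where
  "diam_bounded d D \<U> \<longleftrightarrow> (\<forall>A\<in>\<U>. \<forall>x\<in>A. \<forall>y\<in>A. d x y \<le> D)"

definition good_cover :: "'a set \<Rightarrow> ('a \<Rightarrow> 'a \<Rightarrow> real) \<Rightarrow> nat \<Rightarrow> real \<Rightarrow> real \<Rightarrow> bool" where
  "good_cover X d n r D \<longleftrightarrow>
     (\<exists>\<U> :: nat \<Rightarrow> 'a set set.
        (\<forall>i\<le>n. (\<forall>A\<in>\<U> i. A \<subseteq> X) \<and> r_disjoint d r (\<U> i) \<and> diam_bounded d D (\<U> i)) \<and>
        X \<subseteq> (\<Union>i\<le>n. \<Union>(\<U> i)))"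

definition asdim_le :: "'a set \<Rightarrow> ('a \<Rightarrow> 'a \<Rightarrow> real) \<Rightarrow> nat \<Rightarrow> bool" where
  "asdim_le X d n \<longleftrightarrow> (\<forall>r>0. \<exists>D. good_cover X d n r D)"

definition lasdim_le :: "'a set \<Rightarrow> ('a \<Rightarrow> 'a \<Rightarrow> real) \<Rightarrow> nat \<Rightarrow> bool" where
  "lasdim_le X d n \<longleftrightarrow>
     (\<exists>c>0. \<exists>U::real set. U \<subseteq> {0<..} \<and> (\<forall>M. \<exists>r\<in>U. M < r) \<and>
        (\<forall>r\<in>U. good_cover X d n r (c * r)))"

end

theory Submission
  imports Defs
begin

text \<open>Take d(x, y) = sum of all n with x n \<noteq> y n, a weighted Hamming distance; it is
left-invariant, and a ball of radius R is finite because its elements agree with the centre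
beyond R. At scale r the cosets of the finite subgroup of elements supported in {..r} are
r-separated and uniformly bounded, so asdim G = 0. The elements u_j with entry 1 exactly
in the coordinates 2, ..., j form a chain whose steps have length j + 1 < r as long as
j < r; an r-disjoint cover of G must therefore put u_0 and u_K (K about r) into one member,
whose diameter is then at least about r^2/2, which no bound linear in r can control.\<close>

definition weighted_hamming_dist :: "('i \<Rightarrow> real) \<Rightarrow> ('i \<Rightarrow> 'a) \<Rightarrow> ('i \<Rightarrow> 'a) \<Rightarrow> real" where
  "weighted_hamming_dist w x y = (\<Sum>i | x i \<noteq> y i. w i)"

context
  fixes w :: "'i \<Rightarrow> real"
  assumes weight_nonneg: "\<And>i. 0 \<le> w i"
begin

lemma weighted_hamming_dist_nonneg: "0 \<le> weighted_hamming_dist w x y"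
  unfolding weighted_hamming_dist_def by (simp add: sum_nonneg weight_nonneg)

lemma weighted_hamming_dist_commute: "weighted_hamming_dist w x y = weighted_hamming_dist w y x"
  unfolding weighted_hamming_dist_def by (simp add: eq_commute)

lemma weight_le_weighted_hamming_dist:
  assumes "finite {i. x i \<noteq> y i}" and "x i \<noteq> y i"
  shows "w i \<le> weighted_hamming_dist w x y"
  unfolding weighted_hamming_dist_def
  using assms by (intro member_le_sum) (auto simp: weight_nonneg)

lemma weighted_hamming_dist_le_sum:
  assumes "{i. x i \<noteq> y i} \<subseteq> T" and "finite T"
  shows "weighted_hamming_dist w x y \<le> sum w T"
  unfolding weighted_hamming_dist_def
  using assms by (intro sum_mono2) (auto simp: weight_nonneg)

lemma weighted_hamming_dist_triangle:
  assumes fin: "finite {i. x i \<noteq> y i}" "finite {i. y i \<noteq> z i}"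
  shows "weighted_hamming_dist w x z \<le> weighted_hamming_dist w x y + weighted_hamming_dist w y z"
proof -
  let ?A = "{i. x i \<noteq> y i}" and ?B = "{i. y i \<noteq> z i}"
  have "weighted_hamming_dist w x z \<le> sum w (?A \<union> ?B)"
    using fin by (intro weighted_hamming_dist_le_sum) auto
  also have "\<dots> = sum w ?A + sum w ?B - sum w (?A \<inter> ?B)"
    using fin by (rule sum_Un)
  also have "\<dots> \<le> sum w ?A + sum w ?B"
    by (simp add: sum_nonneg weight_nonneg)
  finally show ?thesis
    unfolding weighted_hamming_dist_def .
qed

lemma is_metric_on_weighted_hamming_dist:
  assumes fin: "\<And>x y. x \<in> X \<Longrightarrow> y \<in> X \<Longrightarrow> finite {i. x i \<noteq> y i}"
    and pos: "\<And>x y i. x \<in> X \<Longrightarrow> y \<in> X \<Longrightarrow> x i \<noteq> y i \<Longrightarrow> 0 < w i"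
  shows "is_metric_on X (weighted_hamming_dist w)"
proof -
  have "weighted_hamming_dist w x y = 0 \<longleftrightarrow> x = y" if "x \<in> X" "y \<in> X" for x y
  proof
    assume dist_0: "weighted_hamming_dist w x y = 0"
    show "x = y"
    proof (rule ccontr)
      assume "x \<noteq> y"
      then obtain i where "x i \<noteq> y i"
        by blast
      then have "0 < w i" "w i \<le> weighted_hamming_dist w x y"
        using pos[OF that] weight_le_weighted_hamming_dist[OF fin[OF that]] by auto
      with dist_0 show False
        by simp
    qed
  qed (simp add: weighted_hamming_dist_def)
  then show ?thesis
    unfolding is_metric_on_def
    using weighted_hamming_dist_nonneg weighted_hamming_dist_commute
      weighted_hamming_dist_triangle fin by blast
qed

end

lemma proper_metric_on_if_finite_balls_at:
  assumes "is_metric_on X d" and "a \<in> X"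
    and balls: "\<And>R. finite {y \<in> X. d a y \<le> R}"
  shows "proper_metric_on X d"
  unfolding proper_metric_on_def
proof (intro ballI allI)
  fix x R assume "x \<in> X"
  have "d a y \<le> d a x + R" if "y \<in> X" "d x y \<le> R" for y
  proof -
    have "d a y \<le> d a x + d x y"
      using assms(1,2) \<open>x \<in> X\<close> \<open>y \<in> X\<close> unfolding is_metric_on_def by blast
    then show ?thesis
      using \<open>d x y \<le> R\<close> by linarith
  qed
  then have "{y \<in> X. d x y \<le> R} \<subseteq> {y \<in> X. d a y \<le> d a x + R}"
    by blast
  then show "finite {y \<in> X. d x y \<le> R}"
    using balls finite_subset by blast
qed

lemma good_cover_0_iff:
  "good_cover X d 0 r D \<longleftrightarrow>
     (\<exists>\<U>. (\<forall>A\<in>\<U>. A \<subseteq> X) \<and> r_disjoint d r \<U> \<and> diam_bounded d D \<U> \<and> X \<subseteq> \<Union>\<U>)"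
proof
  assume "good_cover X d 0 r D"
  then show "\<exists>\<U>. (\<forall>A\<in>\<U>. A \<subseteq> X) \<and> r_disjoint d r \<U> \<and> diam_bounded d D \<U> \<and> X \<subseteq> \<Union>\<U>"
    unfolding good_cover_def by auto
next
  assume "\<exists>\<U>. (\<forall>A\<in>\<U>. A \<subseteq> X) \<and> r_disjoint d r \<U> \<and> diam_bounded d D \<U> \<and> X \<subseteq> \<Union>\<U>"
  then obtain \<U> where "(\<forall>A\<in>\<U>. A \<subseteq> X) \<and> r_disjoint d r \<U> \<and> diam_bounded d D \<U> \<and> X \<subseteq> \<Union>\<U>"
    by blast
  then show "good_cover X d 0 r D"
    unfolding good_cover_def by (intro exI[of _ "\<lambda>_. \<U>"]) simp
qed

lemma good_cover_0_if_fibres: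
  assumes sep: "\<And>x y. x \<in> X \<Longrightarrow> y \<in> X \<Longrightarrow> f x \<noteq> f y \<Longrightarrow> r \<le> d x y"
    and bdd: "\<And>x y. x \<in> X \<Longrightarrow> y \<in> X \<Longrightarrow> f x = f y \<Longrightarrow> d x y \<le> D"
  shows "good_cover X d 0 r D"
proof -
  let ?\<U> = "(\<lambda>x. {y \<in> X. f y = f x}) ` X"
  have "r_disjoint d r ?\<U>"
    unfolding r_disjoint_def
  proof (intro ballI impI)
    fix A B x y assume "A \<in> ?\<U>" "B \<in> ?\<U>" "A \<noteq> B" "x \<in> A" "y \<in> B"
    then have "x \<in> X" "y \<in> X" "f x \<noteq> f y"
      by auto
    then show "r \<le> d x y"
      by (rule sep)
  qed
  moreover have "diam_bounded d D ?\<U>"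
    unfolding diam_bounded_def using bdd by auto
  moreover have "X \<subseteq> \<Union>?\<U>"
    by blast
  ultimately show ?thesis
    unfolding good_cover_0_iff by (intro exI[of _ ?\<U>]) blast
qed

lemma r_disjointD:
  "r_disjoint d r \<U> \<Longrightarrow> A \<in> \<U> \<Longrightarrow> B \<in> \<U> \<Longrightarrow> A \<noteq> B \<Longrightarrow> x \<in> A \<Longrightarrow> y \<in> B \<Longrightarrow> r \<le> d x y"
  unfolding r_disjoint_def by blast

lemma r_disjoint_cover_chain:
  assumes disj: "r_disjoint d r \<U>" and cov: "X \<subseteq> \<Union>\<U>" and A: "A \<in> \<U>" "p 0 \<in> A"
    and "\<forall>j\<le>K. p j \<in> X" and "\<forall>j<K. d (p j) (p (Suc j)) < r"
  shows "p K \<in> A"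
  using assms(5,6)
proof (induction K)
  case 0
  show ?case
    using A by simp
next
  case (Suc K)
  then have "p K \<in> A"
    by simp
  obtain B where B: "B \<in> \<U>" "p (Suc K) \<in> B"
    using Suc.prems(1) cov by blast
  have "d (p K) (p (Suc K)) < r"
    using Suc.prems(2) by simp
  show ?case
  proof (rule ccontr)
    assume "p (Suc K) \<notin> A"
    with B have "A \<noteq> B"
      by blast
    then have "r \<le> d (p K) (p (Suc K))"
      using disj A(1) B \<open>p K \<in> A\<close> by (blast intro: r_disjointD)
    with \<open>d (p K) (p (Suc K)) < r\<close> show False
      by simp
  qed
qed

lemma not_lasdim_le_0_if_long_chains:
  assumes chains: "\<And>c. 0 < c \<Longrightarrow> \<exists>R. \<forall>r>R. \<exists>K p. (\<forall>j\<le>K. p j \<in> X) \<and>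
                    (\<forall>j<K. d (p j) (p (Suc j)) < r) \<and> c * r < d (p 0) (p K)"
  shows "\<not> lasdim_le X d 0"
proof
  assume "lasdim_le X d 0"
  then obtain c U where "0 < c" and unbounded: "\<forall>M. \<exists>r\<in>U. M < r"
    and covers: "\<forall>r\<in>U. good_cover X d 0 r (c * r)"
    unfolding lasdim_le_def by blast
  obtain R where R: "\<forall>r>R. \<exists>K p. (\<forall>j\<le>K. p j \<in> X) \<and>
      (\<forall>j<K. d (p j) (p (Suc j)) < r) \<and> c * r < d (p 0) (p K)"
    using chains[OF \<open>0 < c\<close>] by blast
  obtain r where "r \<in> U" "R < r"
    using unbounded by blast
  then obtain K p where p: "\<forall>j\<le>K. p j \<in> X" "\<forall>j<K. d (p j) (p (Suc j)) < r"
    and far: "c * r < d (p 0) (p K)"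
    using R by blast
  obtain \<U> where disj: "r_disjoint d r \<U>"
    and diam: "diam_bounded d (c * r) \<U>" and cov: "X \<subseteq> \<Union>\<U>"
    using covers \<open>r \<in> U\<close> unfolding good_cover_0_iff by blast
  obtain A where A: "A \<in> \<U>" "p 0 \<in> A"
    using p(1) cov by blast
  have "p K \<in> A"
    using disj cov A p by (rule r_disjoint_cover_chain)
  then have "d (p 0) (p K) \<le> c * r"
    using diam A unfolding diam_bounded_def by blast
  with far show False
    by simp
qed

abbreviation dsumG_dist :: "(nat \<Rightarrow> int) \<Rightarrow> (nat \<Rightarrow> int) \<Rightarrow> real" where
  "dsumG_dist \<equiv> weighted_hamming_dist real"

lemma dsumG_diff_finite:
  assumes "x \<in> dsumG" "y \<in> dsumG"
  shows "finite {n. x n \<noteq> y n}"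
proof -
  have "{n. x n \<noteq> y n} \<subseteq> {n. x n \<noteq> 0} \<union> {n. y n \<noteq> 0}"
    by auto
  then show ?thesis
    using assms unfolding dsumG_def by (auto intro: finite_subset)
qed

lemma dsumG_diff_ge_2:
  assumes "x \<in> dsumG" "y \<in> dsumG" "x n \<noteq> y n"
  shows "2 \<le> n"
proof (rule ccontr)
  assume "\<not> 2 \<le> n"
  then have "n = 0 \<or> n = 1"
    by auto
  then show False
    using assms unfolding dsumG_def by auto
qed

lemma dsumG_coordinate_bounds:
  assumes "g \<in> dsumG"
  shows "0 \<le> g n \<and> g n \<le> int n"
proof (cases "2 \<le> n")
  case False
  then have "n = 0 \<or> n = 1"
    by auto
  then show ?thesis
    using assms unfolding dsumG_def by auto
qed (use assms in \<open>auto simp: dsumG_def\<close>)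

lemma dsumG_add_eq_iff:
  assumes "g \<in> dsumG" "x \<in> dsumG" "y \<in> dsumG"
  shows "dsumG_add g x n = dsumG_add g y n \<longleftrightarrow> x n = y n"
proof (cases "2 \<le> n")
  case True
  then have "x n mod int n = x n" "y n mod int n = y n"
    using assms(2,3) unfolding dsumG_def by auto
  then show ?thesis
    unfolding dsumG_add_def by (metis minus_add_cancel mod_add_right_eq)
next
  case False
  then have "n = 0 \<or> n = 1"
    by auto
  then show ?thesis
    using assms unfolding dsumG_def dsumG_add_def by auto
qed

lemma dsumG_dist_le_weight:
  "x \<in> dsumG \<Longrightarrow> y \<in> dsumG \<Longrightarrow> x n \<noteq> y n \<Longrightarrow> real n \<le> dsumG_dist x y"
  by (intro weight_le_weighted_hamming_dist dsumG_diff_finite) auto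

lemma is_metric_on_dsumG_dist: "is_metric_on dsumG dsumG_dist"
  using dsumG_diff_finite dsumG_diff_ge_2
  by (intro is_metric_on_weighted_hamming_dist) force+

lemma dsumG_dist_left_invariant:
  assumes "g \<in> dsumG" "x \<in> dsumG" "y \<in> dsumG"
  shows "dsumG_dist (dsumG_add g x) (dsumG_add g y) = dsumG_dist x y"
  unfolding weighted_hamming_dist_def using dsumG_add_eq_iff[OF assms] by simp

lemma proper_metric_on_dsumG_dist: "proper_metric_on dsumG dsumG_dist"
proof (rule proper_metric_on_if_finite_balls_at[OF is_metric_on_dsumG_dist])
  let ?zero = "\<lambda>_::nat. 0::int"
  show zero: "?zero \<in> dsumG"
    by (simp add: dsumG_def)
  fix R :: real
  define N where "N = nat \<lceil>R\<rceil>"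
  have "{y \<in> dsumG. dsumG_dist ?zero y \<le> R} \<subseteq>
      {y. \<forall>n. (n \<in> {..N} \<longrightarrow> y n \<in> {0..int N}) \<and> (n \<notin> {..N} \<longrightarrow> y n = 0)}"
  proof (intro subsetI CollectI allI conjI impI)
    fix y n assume "y \<in> {y \<in> dsumG. dsumG_dist ?zero y \<le> R}"
    then have y: "y \<in> dsumG" "dsumG_dist ?zero y \<le> R"
      by auto
    show "y n = 0" if "n \<notin> {..N}"
    proof (rule ccontr)
      assume "y n \<noteq> 0"
      then have "real n \<le> R"
        using dsumG_dist_le_weight[OF zero y(1), of n] y(2) by simp
      moreover have "real N < real n"
        using that by simp
      ultimately show False
        using real_nat_ceiling_ge[of R] unfolding N_def by linarith
    qed
    show "y n \<in> {0..int N}" if "n \<in> {..N}"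
      using dsumG_coordinate_bounds[OF y(1), of n] that by auto
  qed
  then show "finite {y \<in> dsumG. dsumG_dist ?zero y \<le> R}"
    by (rule finite_subset) (intro finite_set_of_finite_funs; simp)
qed

lemma asdim_le_0_dsumG: "asdim_le dsumG dsumG_dist 0"
  unfolding asdim_le_def
proof (intro allI impI)
  fix r :: real
  define K where "K = nat \<lceil>r\<rceil>"
  let ?tail = "\<lambda>x::nat \<Rightarrow> int. \<lambda>n. if n \<le> K then 0 else x n"
  have "good_cover dsumG dsumG_dist 0 r (sum real {..K})"
  proof (rule good_cover_0_if_fibres[where f = ?tail])
    fix x y assume "x \<in> dsumG" "y \<in> dsumG" "?tail x \<noteq> ?tail y"
    then obtain n where "K < n" "real n \<le> dsumG_dist x y"
      using dsumG_dist_le_weight by (force split: if_splits)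
    then show "r \<le> dsumG_dist x y"
      unfolding K_def by linarith
  next
    fix x y assume "?tail x = ?tail y"
    then have "{n. x n \<noteq> y n} \<subseteq> {..K}"
      by (auto dest: fun_cong split: if_splits)
    then show "dsumG_dist x y \<le> sum real {..K}"
      by (intro weighted_hamming_dist_le_sum) auto
  qed
  then show "\<exists>D. good_cover dsumG dsumG_dist 0 r D" ..
qed

definition ones_upto :: "nat \<Rightarrow> nat \<Rightarrow> int" where
  "ones_upto j = (\<lambda>n. if 2 \<le> n \<and> n \<le> j then 1 else 0)"

lemma ones_upto_in_dsumG: "ones_upto j \<in> dsumG"
proof -
  have "{n. ones_upto j n \<noteq> 0} \<subseteq> {..j}"
    unfolding ones_upto_def by auto
  then show ?thesis
    unfolding dsumG_def ones_upto_def by (auto intro: finite_subset)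
qed

lemma dsumG_dist_ones_upto_Suc: "dsumG_dist (ones_upto j) (ones_upto (Suc j)) \<le> real (Suc j)"
proof -
  have "{n. ones_upto j n \<noteq> ones_upto (Suc j) n} \<subseteq> {Suc j}"
    unfolding ones_upto_def by auto
  then have "dsumG_dist (ones_upto j) (ones_upto (Suc j)) \<le> sum real {Suc j}"
    by (intro weighted_hamming_dist_le_sum) auto
  then show ?thesis
    by simp
qed

lemma dsumG_dist_ones_upto_0:
  "real K * (real K + 1) / 2 - 1 \<le> dsumG_dist (ones_upto 0) (ones_upto K)"
proof -
  have "{n. ones_upto 0 n \<noteq> ones_upto K n} = {2..K}"
    unfolding ones_upto_def by auto
  then have "dsumG_dist (ones_upto 0) (ones_upto K) = sum real {2..K}"
    unfolding weighted_hamming_dist_def by simp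
  moreover have "sum real {Suc 0..K} \<le> sum real (insert 1 {2..K})"
    by (rule sum_mono2) auto
  ultimately show ?thesis
    using double_gauss_sum_from_Suc_0[of K, where ?'a = real] by simp
qed

lemma not_lasdim_le_0_dsumG: "\<not> lasdim_le dsumG dsumG_dist 0"
proof (rule not_lasdim_le_0_if_long_chains)
  fix c :: real assume "0 < c"
  show "\<exists>R. \<forall>r>R. \<exists>K p. (\<forall>j\<le>K. p j \<in> dsumG) \<and>
      (\<forall>j<K. dsumG_dist (p j) (p (Suc j)) < r) \<and> c * r < dsumG_dist (p 0) (p K)"
  proof (rule exI[of _ "2 * c + 3"], intro allI impI)
    fix r :: real assume r: "2 * c + 3 < r"
    define K where "K = nat \<lceil>r\<rceil> - 1"
    have K: "real K < r" "r - 1 \<le> real K"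
      using r \<open>0 < c\<close> unfolding K_def by linarith+
    have "2 * (c + 1) * r \<le> (r - 1) * r"
      using r \<open>0 < c\<close> by (intro mult_right_mono) auto
    then have "(c + 1) * r \<le> (r - 1) * r / 2"
      by (simp add: algebra_simps)
    also have "\<dots> \<le> real K * (real K + 1) / 2"
      using K r \<open>0 < c\<close> by (intro divide_right_mono mult_mono) auto
    finally have "c * r < dsumG_dist (ones_upto 0) (ones_upto K)"
      using dsumG_dist_ones_upto_0[of K] r \<open>0 < c\<close> by (simp add: algebra_simps)
    moreover have "dsumG_dist (ones_upto j) (ones_upto (Suc j)) < r" if "j < K" for j
      using dsumG_dist_ones_upto_Suc[of j] that K by linarith
    ultimately show "\<exists>K p. (\<forall>j\<le>K. p j \<in> dsumG) \<and>
        (\<forall>j<K. dsumG_dist (p j) (p (Suc j)) < r) \<and> c * r < dsumG_dist (p 0) (p K)"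
      using ones_upto_in_dsumG by blast
  qed
qed

theorem mainTheorem16:
  shows "\<exists>d :: (nat \<Rightarrow> int) \<Rightarrow> (nat \<Rightarrow> int) \<Rightarrow> real.
           is_metric_on dsumG d \<and> proper_metric_on dsumG d \<and>
           (\<forall>g\<in>dsumG. \<forall>x\<in>dsumG. \<forall>y\<in>dsumG. d (dsumG_add g x) (dsumG_add g y) = d x y) \<and>
           asdim_le dsumG d 0 \<and> \<not> lasdim_le dsumG d 0"
proof (intro exI[of _ dsumG_dist] conjI ballI)
  show "is_metric_on dsumG dsumG_dist"
    by (rule is_metric_on_dsumG_dist)
  show "proper_metric_on dsumG dsumG_dist"
    by (rule proper_metric_on_dsumG_dist)
  show "dsumG_dist (dsumG_add g x) (dsumG_add g y) = dsumG_dist x y"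
    if "g \<in> dsumG" "x \<in> dsumG" "y \<in> dsumG" for g x y
    using that by (rule dsumG_dist_left_invariant)
  show "asdim_le dsumG dsumG_dist 0"
    by (rule asdim_le_0_dsumG)
  show "\<not> lasdim_le dsumG dsumG_dist 0"
    by (rule not_lasdim_le_0_dsumG)
qed

end
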